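(* Let $\mathbf{k}$ be a field of characteristic zero, $n\ge3$, and let $S=(a_1,\dots,a_n)$, $S'=(a'_1,\dots,a'_n)$ have positive integer entries. Assume $i\in\{1,\dots,n\}$ is such that $S\le^iS'$, and set $k=a'_i/a_i\in\mathbb{N}\setminus\{0\}$. Then $B_S\cong B_{S'}^{(k)}$. Consequently $\mathrm{Proj}\,B_S\cong\mathrm{Proj}\,B_{S'}$.
   Context: $B_T=\mathbf{k}[X_1,\dots,X_n]/\langle X_1^{t_1}+\cdots+X_n^{t_n}\rangle$ for $T=(t_1,\dots,t_n)$, with its standard $\mathbb{N}$-grading in which the image of $X_j$ is homogeneous of degree $\mathrm{lcm}(T)/t_j$. For an $\mathbb{N}$-graded ring $R=\bigoplus_{m\ge0}R_m$ and $k>0$, $R^{(k)}=\bigoplus_{m\ge0}R_{mk}$. $S_i$ denotes $S$ with the $i$-th entry removed, $g_i(S)=\gcd(a_i,\mathrm{lcm}(S_i))$, and $S\le^iS'$ means $S_i=S'_i$ and $g_i(S')\mid a_i\mid a'_i$. *)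

theory Defs
  imports "HOL-Algebra.Algebra" "HOL-Library.Poly_Mapping"
begin

text \<open>Variables are indexed from 0, so X_j of the paper is variable j-1 here.\<close>

type_synonym 'a mpoly = "(nat \<Rightarrow>\<^sub>0 nat) \<Rightarrow>\<^sub>0 'a"

definition Xpow :: "nat \<Rightarrow> nat \<Rightarrow> 'a::field mpoly" where
  "Xpow j e = Poly_Mapping.single (Poly_Mapping.single j e) 1"

definition const_poly :: "'a::field \<Rightarrow> 'a mpoly" where
  "const_poly c = Poly_Mapping.single 0 c"

definition pring :: "nat \<Rightarrow> ('a::field mpoly) ring" where
  "pring n = \<lparr> carrier = {p. \<forall>m \<in> Poly_Mapping.keys p. Poly_Mapping.keys m \<subseteq> {..<n}},
               monoid.mult = (*), monoid.one = 1, ring.zero = 0, ring.add = (+) \<rparr>"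

definition fermat_poly :: "nat list \<Rightarrow> 'a::field mpoly" where
  "fermat_poly T = (\<Sum>j<length T. Xpow j (T ! j))"

definition fermat_ideal :: "nat list \<Rightarrow> 'a::field mpoly set" where
  "fermat_ideal T = genideal (pring (length T)) {fermat_poly T}"

definition B_ring :: "nat list \<Rightarrow> ('a::field mpoly set) ring" where
  "B_ring T = pring (length T) Quot fermat_ideal T"

definition wdeg :: "nat list \<Rightarrow> (nat \<Rightarrow>\<^sub>0 nat) \<Rightarrow> nat" where
  "wdeg T m = (\<Sum>j<length T. Poly_Mapping.lookup m j * (Lcm (set T) div (T ! j)))"

definition homogeneous :: "nat list \<Rightarrow> nat \<Rightarrow> 'a::field mpoly \<Rightarrow> bool" where
  "homogeneous T d p \<longleftrightarrow> (\<forall>m \<in> Poly_Mapping.keys p. wdeg T m = d)"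

text \<open>The homogeneous component (B_T)_d: classes of homogeneous polynomials of degree d
  (the defining ideal is homogeneous).\<close>
definition B_part :: "nat list \<Rightarrow> nat \<Rightarrow> 'a::field mpoly set set" where
  "B_part T d = {fermat_ideal T +>\<^bsub>pring (length T)\<^esub> p | p.
                   p \<in> carrier (pring (length T)) \<and> homogeneous T d p}"

text \<open>Veronese subring B_T^{(k)} = direct sum of the (B_T)_{mk}: classes of polynomials
  all of whose monomials have degree divisible by k.\<close>
definition veronese :: "nat list \<Rightarrow> nat \<Rightarrow> ('a::field mpoly set) ring" where
  "veronese T k = (B_ring T)\<lparr> carrier :=
     {fermat_ideal T +>\<^bsub>pring (length T)\<^esub> p | p.
        p \<in> carrier (pring (length T)) \<and> (\<forall>m \<in> Poly_Mapping.keys p. k dvd wdeg T m)} \<rparr>"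

definition graded_iso_veronese :: "'a::field itself \<Rightarrow> nat list \<Rightarrow> nat list \<Rightarrow> nat \<Rightarrow> bool" where
  "graded_iso_veronese _ S S' k \<longleftrightarrow>
     (\<exists>\<phi>. \<phi> \<in> ring_iso (B_ring S :: ('a mpoly set) ring) (veronese S' k) \<and>
          (\<forall>c::'a. \<phi> (fermat_ideal S +>\<^bsub>pring (length S)\<^esub> const_poly c)
                  = fermat_ideal S' +>\<^bsub>pring (length S')\<^esub> const_poly c) \<and>
          (\<forall>d. \<phi> ` (B_part S d :: 'a mpoly set set) = B_part S' (d * k)))"

text \<open>S_i: S with the i-th entry (0-based) removed; g_i(S) = gcd(a_i, lcm(S_i)).\<close>
definition remove_nth :: "nat \<Rightarrow> nat list \<Rightarrow> nat list" where
  "remove_nth i S = take i S @ drop (Suc i) S"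

definition g_idx :: "nat \<Rightarrow> nat list \<Rightarrow> nat" where
  "g_idx i S = gcd (S ! i) (Lcm (set (remove_nth i S)))"

definition le_idx :: "nat list \<Rightarrow> nat \<Rightarrow> nat list \<Rightarrow> bool" where
  "le_idx S i S' \<longleftrightarrow> remove_nth i S = remove_nth i S' \<and>
                      g_idx i S' dvd S ! i \<and> S ! i dvd S' ! i"

end

theory Submission
  imports Defs
begin

text \<open>The substitution \<sigma>: X_i \<mapsto> X_i^k is an injective ring endomorphism of the
  polynomial ring which sends the Fermat polynomial of S to that of S' = S[i := k a_i] and
  multiplies degrees by k: the S'-weights are k times the S-weights, except at X_i where they
  agree.  The image of \<sigma> is spanned by the monomials whose X_i-exponent is divisible by k, and
  the hypothesis g_i(S') | a_i makes k coprime to the S-weight of X_i, so these are exactly the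
  monomials of S'-degree divisible by k.  Extracting the coefficients of the monomials in the image
  of \<sigma> is \<sigma>-semilinear, so the preimage under \<sigma> of the ideal (F_S') is (F_S), and the
  homomorphism theorem for p \<mapsto> [\<sigma> p] gives B_S \<cong> B_S'^(k), compatibly with the gradings.\<close>

section \<open>Pushing polynomial mappings forward along an injection of keys\<close>

definition push_key :: "('a \<Rightarrow> 'b) \<Rightarrow> ('a \<Rightarrow>\<^sub>0 'c::zero) \<Rightarrow> 'b \<Rightarrow>\<^sub>0 'c" where
  "push_key f p =
     Abs_poly_mapping (\<lambda>y. if y \<in> range f then Poly_Mapping.lookup p (inv_into UNIV f y) else 0)"

lemma lookup_push_key:
  "Poly_Mapping.lookup (push_key f p) y =
     (if y \<in> range f then Poly_Mapping.lookup p (inv_into UNIV f y) else 0)"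
proof -
  let ?g = "\<lambda>y. if y \<in> range f then Poly_Mapping.lookup p (inv_into UNIV f y) else 0"
  have "{y. ?g y \<noteq> 0} \<subseteq> f ` Poly_Mapping.keys p"
  proof
    fix y assume "y \<in> {y. ?g y \<noteq> 0}"
    then have "y = f (inv_into UNIV f y)" "inv_into UNIV f y \<in> Poly_Mapping.keys p"
      by (auto simp: in_keys_iff f_inv_into_f split: if_splits)
    then show "y \<in> f ` Poly_Mapping.keys p" by blast
  qed
  then have "finite {y. ?g y \<noteq> 0}"
    by (rule finite_subset) simp
  then show ?thesis
    unfolding push_key_def by simp
qed

lemma push_key_plus: "push_key f (p + q) = push_key f p + push_key f q"
  by (rule poly_mapping_eqI) (simp add: lookup_push_key lookup_add)

lemma push_key_zero [simp]: "push_key f 0 = 0"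
  by (rule poly_mapping_eqI) (simp add: lookup_push_key)

lemma push_key_sum: "push_key f (sum g A) = (\<Sum>x\<in>A. push_key f (g x))"
  by (induction A rule: infinite_finite_induct) (simp_all add: push_key_plus)

context
  fixes f :: "'a \<Rightarrow> 'b"
  assumes inj_f [transfer_rule]: "inj f"
begin

lemma lookup_push_key_image [simp]:
  "Poly_Mapping.lookup (push_key f p) (f x) = Poly_Mapping.lookup p x"
  by (simp add: lookup_push_key inj_f)

lemma keys_push_key: "Poly_Mapping.keys (push_key f p) = f ` Poly_Mapping.keys p"
  by (auto simp: in_keys_iff lookup_push_key inj_f split: if_splits)

lemma push_key_single [simp]:
  "push_key f (Poly_Mapping.single x c) = Poly_Mapping.single (f x) c"
proof (rule poly_mapping_eqI)
  fix y
  show "Poly_Mapping.lookup (push_key f (Poly_Mapping.single x c)) y =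
      Poly_Mapping.lookup (Poly_Mapping.single (f x) c) y"
    by (cases "y \<in> range f") (auto simp: lookup_push_key lookup_single when_def inj_f inj_eq[OF inj_f])
qed

lemma lookup_map_key [simp]:
  "Poly_Mapping.lookup (Poly_Mapping.map_key f p) x = Poly_Mapping.lookup p (f x)"
  by transfer simp

lemma map_key_push_key [simp]: "Poly_Mapping.map_key f (push_key f p) = p"
  by (rule poly_mapping_eqI) simp

lemma map_key_single_outside_range:
  "y \<notin> range f \<Longrightarrow> Poly_Mapping.map_key f (Poly_Mapping.single y c) = 0"
  by (rule poly_mapping_eqI) (auto simp: lookup_single when_def)

lemma push_key_map_key:
  assumes "Poly_Mapping.keys q \<subseteq> range f"
  shows "push_key f (Poly_Mapping.map_key f q) = q"
proof (rule poly_mapping_eqI)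
  fix y
  show "Poly_Mapping.lookup (push_key f (Poly_Mapping.map_key f q)) y = Poly_Mapping.lookup q y"
    using assms by (auto simp: lookup_push_key f_inv_into_f in_keys_iff)
qed

lemma image_push_key_keys_subset:
  "push_key f ` {p. Poly_Mapping.keys p \<subseteq> A} = {q. Poly_Mapping.keys q \<subseteq> f ` A}"
proof (intro equalityI subsetI)
  fix q assume "q \<in> {q. Poly_Mapping.keys q \<subseteq> f ` A}"
  then have "Poly_Mapping.keys q \<subseteq> f ` A" by simp
  then have "q = push_key f (Poly_Mapping.map_key f q)"
    by (intro push_key_map_key[symmetric]) blast
  moreover have "Poly_Mapping.keys (Poly_Mapping.map_key f q) \<subseteq> A"
    using \<open>Poly_Mapping.keys q \<subseteq> f ` A\<close> inj_image_mem_iff[OF inj_f]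
    by (auto simp: keys_map_key[OF inj_f])
  ultimately show "q \<in> push_key f ` {p. Poly_Mapping.keys p \<subseteq> A}" by blast
qed (force simp: keys_push_key)

end

lemma poly_mapping_single_induct [case_names zero add]:
  assumes "P 0" and "\<And>p x c. P p \<Longrightarrow> P (p + Poly_Mapping.single x c)"
  shows "P p"
proof (induction p rule: update_induct)
  case (update p x c)
  have "Poly_Mapping.update x c p = p + Poly_Mapping.single x c"
    using update.hyps(1)
    by (intro poly_mapping_eqI) (auto simp: lookup_update lookup_add lookup_single in_keys_iff)
  then show ?case using update.IH assms(2) by simp
qed (rule assms(1))

context
  fixes f :: "'m::cancel_comm_monoid_add \<Rightarrow> 'm"
  assumes inj_f [transfer_rule]: "inj f" and f_add: "\<And>a b. f (a + b) = f a + f b"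
begin

lemma push_key_mult:
  "push_key f (p * q) = push_key f p * (push_key f q :: 'm \<Rightarrow>\<^sub>0 'c::semiring_0)"
proof (induction p rule: poly_mapping_single_induct)
  case (add p x c)
  have "push_key f (Poly_Mapping.single x c * q) = Poly_Mapping.single (f x) c * push_key f q"
    by (induction q rule: poly_mapping_single_induct)
      (simp_all add: distrib_left push_key_plus inj_f mult_single f_add)
  with add.IH show ?case
    by (simp add: distrib_right push_key_plus inj_f)
qed (simp add: inj_f)

lemma push_key_one: "push_key f 1 = 1"
proof -
  have "f 0 = 0" using f_add[of 0 0] by (simp add: add_cancel_right_right)
  then show ?thesis by (metis push_key_single[OF inj_f] single_one)
qed

lemma map_key_push_key_mult:
  assumes saturated: "\<And>a y. f a + y \<in> range f \<Longrightarrow> y \<in> range f"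
  shows "Poly_Mapping.map_key f (push_key f p * q) =
    p * (Poly_Mapping.map_key f q :: 'm \<Rightarrow>\<^sub>0 'c::semiring_0)"
proof (induction p rule: poly_mapping_single_induct)
  case (add p x c)
  have "Poly_Mapping.map_key f (Poly_Mapping.single (f x) c * q) =
      Poly_Mapping.single x c * Poly_Mapping.map_key f q"
  proof (induction q rule: poly_mapping_single_induct)
    case (add q y d)
    have "Poly_Mapping.map_key f (Poly_Mapping.single (f x + y) (c * d)) =
        Poly_Mapping.single x c * Poly_Mapping.map_key f (Poly_Mapping.single y d)"
    proof (cases "y \<in> range f")
      case True
      then obtain z where "y = f z" by blast
      then show ?thesis by (simp add: f_add[symmetric] inj_f mult_single)
    next
      case False
      then have "f x + y \<notin> range f" using saturated by blast
      with False show ?thesis by (simp add: map_key_single_outside_range[OF inj_f])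
    qed
    with add.IH show ?case by (simp add: distrib_left mult_single map_key_plus[OF inj_f])
  qed (simp add: inj_f)
  with add.IH show ?case
    by (simp add: distrib_right push_key_plus map_key_plus[OF inj_f] inj_f)
qed (simp add: inj_f)

end

section \<open>Stretching one exponent\<close>

definition stretch :: "nat \<Rightarrow> nat \<Rightarrow> (nat \<Rightarrow>\<^sub>0 nat) \<Rightarrow> (nat \<Rightarrow>\<^sub>0 nat)" where
  "stretch i k m = Poly_Mapping.update i (k * Poly_Mapping.lookup m i) m"

lemma lookup_stretch:
  "Poly_Mapping.lookup (stretch i k m) j =
     (if j = i then k * Poly_Mapping.lookup m i else Poly_Mapping.lookup m j)"
  by (simp add: stretch_def lookup_update)

lemma stretch_add: "stretch i k (a + b) = stretch i k a + stretch i k b"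
  by (rule poly_mapping_eqI) (simp add: lookup_stretch lookup_add algebra_simps)

lemma inj_stretch: "0 < k \<Longrightarrow> inj (stretch i k)"
  by (rule injI, rule poly_mapping_eqI) (metis lookup_stretch nonzero_mult_div_cancel_left not_gr0)

lemma range_stretch: "0 < k \<Longrightarrow> range (stretch i k) = {m. k dvd Poly_Mapping.lookup m i}"
proof (intro equalityI subsetI)
  fix m :: "nat \<Rightarrow>\<^sub>0 nat" assume "0 < k" "m \<in> {m. k dvd Poly_Mapping.lookup m i}"
  then have "m = stretch i k (Poly_Mapping.update i (Poly_Mapping.lookup m i div k) m)"
    by (intro poly_mapping_eqI) (auto simp: lookup_stretch lookup_update)
  then show "m \<in> range (stretch i k)" by blast
qed (auto simp: lookup_stretch)

lemma stretch_zero [simp]: "stretch i k 0 = 0"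
  by (rule poly_mapping_eqI) (simp add: lookup_stretch)

lemma keys_stretch: "0 < k \<Longrightarrow> Poly_Mapping.keys (stretch i k m) = Poly_Mapping.keys m"
  by (auto simp: in_keys_iff lookup_stretch split: if_splits)

lemma map_key_stretch_push_key_mult:
  assumes "0 < k"
  shows "Poly_Mapping.map_key (stretch i k) (push_key (stretch i k) p * q) =
    p * (Poly_Mapping.map_key (stretch i k) q :: (nat \<Rightarrow>\<^sub>0 nat) \<Rightarrow>\<^sub>0 'c::semiring_0)"
proof (rule map_key_push_key_mult)
  show "y \<in> range (stretch i k)" if "stretch i k a + y \<in> range (stretch i k)" for a y
    using that assms by (simp add: range_stretch lookup_add lookup_stretch dvd_add_right_iff)
qed (simp_all add: assms inj_stretch stretch_add)

section \<open>The polynomial ring and the Fermat ideal\<close>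

lemma carrier_pring:
  "carrier (pring n) = {p. Poly_Mapping.keys p \<subseteq> {m. Poly_Mapping.keys m \<subseteq> {..<n}}}"
  by (auto simp: pring_def)

lemma pring_simps [simp]:
  "a \<otimes>\<^bsub>pring n\<^esub> b = a * b" "a \<oplus>\<^bsub>pring n\<^esub> b = a + b" "\<one>\<^bsub>pring n\<^esub> = 1" "\<zero>\<^bsub>pring n\<^esub> = 0"
  by (simp_all add: pring_def)

lemma pring_add_closed:
  "p \<in> carrier (pring n) \<Longrightarrow> q \<in> carrier (pring n) \<Longrightarrow> p + q \<in> carrier (pring n)"
  using keys_add[of p q] by (auto simp: carrier_pring)

lemma pring_mult_closed:
  "p \<in> carrier (pring n) \<Longrightarrow> q \<in> carrier (pring n) \<Longrightarrow> p * q \<in> carrier (pring n)"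
  using keys_mult[of p q] keys_add by (fastforce simp: carrier_pring)

lemma pring_uminus_closed: "p \<in> carrier (pring n) \<Longrightarrow> - p \<in> carrier (pring n)"
  by (simp add: carrier_pring)

lemma cring_pring: "cring (pring n)"
proof (rule cringI)
  show "abelian_group (pring n)"
  proof (rule abelian_groupI)
    show "\<exists>y\<in>carrier (pring n). y \<oplus>\<^bsub>pring n\<^esub> x = \<zero>\<^bsub>pring n\<^esub>"
      if "x \<in> carrier (pring n)" for x
      using that by (intro bexI[of _ "- x"]) (simp_all add: pring_uminus_closed)
  qed (simp_all add: pring_add_closed add.assoc add.commute, simp add: carrier_pring)
  show "comm_monoid (pring n)"
    by (rule comm_monoidI)
      (simp_all add: pring_mult_closed mult.assoc mult.commute, simp add: carrier_pring)
qed (simp add: distrib_right)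

lemma push_key_stretch_carrier:
  "0 < k \<Longrightarrow> p \<in> carrier (pring n) \<Longrightarrow> push_key (stretch i k) p \<in> carrier (pring n)"
  by (force simp: carrier_pring keys_push_key inj_stretch keys_stretch)

lemma map_key_stretch_carrier:
  "0 < k \<Longrightarrow> p \<in> carrier (pring n) \<Longrightarrow>
    Poly_Mapping.map_key (stretch i k) p \<in> carrier (pring n)"
  by (force simp: carrier_pring keys_map_key inj_stretch keys_stretch)

lemma push_key_stretch_ring_hom:
  "0 < k \<Longrightarrow> push_key (stretch i k) \<in> ring_hom (pring n) (pring n)"
  by (rule ring_hom_memI)
    (simp_all add: push_key_stretch_carrier push_key_mult push_key_plus push_key_one
      inj_stretch stretch_add)

lemma fermat_poly_carrier: "fermat_poly T \<in> carrier (pring (length T))"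
  by (auto simp: fermat_poly_def carrier_pring Xpow_def split: if_splits
      intro!: subset_trans[OF keys_sum])

lemma mem_fermat_ideal:
  "p \<in> fermat_ideal T \<longleftrightarrow> (\<exists>x \<in> carrier (pring (length T)). p = x * fermat_poly T)"
proof -
  interpret cring "pring (length T)" by (rule cring_pring)
  show ?thesis
    unfolding fermat_ideal_def cgenideal_eq_genideal[OF fermat_poly_carrier, symmetric]
    by (auto simp: cgenideal_def)
qed

lemma ideal_fermat_ideal: "ideal (fermat_ideal T) (pring (length T))"
proof -
  interpret cring "pring (length T)" by (rule cring_pring)
  show ?thesis
    unfolding fermat_ideal_def by (rule genideal_ideal) (simp add: fermat_poly_carrier)
qed

lemma push_key_stretch_fermat_poly:
  assumes "0 < k" "i < length S"
  shows "push_key (stretch i k) (fermat_poly S) = fermat_poly (S[i := k * S ! i])"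
proof -
  have "push_key (stretch i k) (Xpow j (S ! j)) = Xpow j (S[i := k * S ! i] ! j)"
    if "j < length S" for j
  proof -
    have "stretch i k (Poly_Mapping.single j (S ! j)) =
        Poly_Mapping.single j (S[i := k * S ! i] ! j)"
      using that by (intro poly_mapping_eqI) (auto simp: lookup_stretch lookup_single when_def)
    then show ?thesis by (simp add: Xpow_def inj_stretch assms(1))
  qed
  then show ?thesis
    unfolding fermat_poly_def push_key_sum length_list_update by (intro sum.cong) auto
qed

lemma push_key_stretch_mem_fermat_ideal_iff:
  assumes k: "0 < k" and i: "i < length S" and p: "p \<in> carrier (pring (length S))"
  shows "push_key (stretch i k) p \<in> fermat_ideal (S[i := k * S ! i]) \<longleftrightarrow> p \<in> fermat_ideal S"
proof
  assume "p \<in> fermat_ideal S"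
  then obtain x where x: "x \<in> carrier (pring (length S))" "p = x * fermat_poly S"
    by (auto simp: mem_fermat_ideal)
  then have "push_key (stretch i k) p =
      push_key (stretch i k) x * fermat_poly (S[i := k * S ! i])"
    by (simp add: push_key_mult inj_stretch stretch_add k push_key_stretch_fermat_poly[OF k i])
  then show "push_key (stretch i k) p \<in> fermat_ideal (S[i := k * S ! i])"
    using push_key_stretch_carrier[OF k x(1)] by (auto simp: mem_fermat_ideal)
next
  assume "push_key (stretch i k) p \<in> fermat_ideal (S[i := k * S ! i])"
  then obtain y where y: "y \<in> carrier (pring (length S))"
    "push_key (stretch i k) p = y * push_key (stretch i k) (fermat_poly S)"
    by (auto simp: mem_fermat_ideal push_key_stretch_fermat_poly[OF k i])
  have "p = Poly_Mapping.map_key (stretch i k) (push_key (stretch i k) p)"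
    by (simp add: inj_stretch k)
  also have "\<dots> = fermat_poly S * Poly_Mapping.map_key (stretch i k) y"
    unfolding y(2) by (subst mult.commute) (rule map_key_stretch_push_key_mult[OF k])
  finally show "p \<in> fermat_ideal S"
    using map_key_stretch_carrier[OF k y(1)] by (auto simp: mem_fermat_ideal mult.commute)
qed

lemma B_part_eq_image:
  "B_part T d = (\<lambda>p. fermat_ideal T +>\<^bsub>pring (length T)\<^esub> p) `
     {p. Poly_Mapping.keys p \<subseteq> {m. Poly_Mapping.keys m \<subseteq> {..<length T} \<and> wdeg T m = d}}"
  unfolding B_part_def setcompr_eq_image
  by (rule arg_cong[where f = "image _"]) (auto simp: carrier_pring homogeneous_def)

lemma carrier_veronese_eq_image:
  "carrier (veronese T k) = (\<lambda>p. fermat_ideal T +>\<^bsub>pring (length T)\<^esub> p) `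
     {p. Poly_Mapping.keys p \<subseteq> {m. Poly_Mapping.keys m \<subseteq> {..<length T} \<and> k dvd wdeg T m}}"
  unfolding veronese_def setcompr_eq_image
  by (simp, rule arg_cong[where f = "image _"]) (auto simp: carrier_pring)

section \<open>Weights\<close>

lemma gcd_eq_if_gcd_mult_dvd:
  fixes a k L :: nat
  assumes "gcd (k * a) L dvd a"
  shows "gcd (k * a) L = gcd a L"
  using assms by (simp add: dvd_antisym gcd_mult_left_right_cancel)

lemma lcm_mult_if_gcd_mult_dvd:
  fixes a k L :: nat
  assumes "gcd (k * a) L dvd a"
  shows "lcm (k * a) L = k * lcm a L"
proof -
  have "gcd a L dvd a * L" by simp
  then show ?thesis
    by (simp add: lcm_nat_def gcd_eq_if_gcd_mult_dvd[OF assms] div_mult_swap mult.assoc)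
qed

lemma coprime_if_gcd_mult_dvd:
  fixes a k L :: nat
  assumes "0 < a" and gcd_dvd: "gcd (k * a) L dvd a"
  shows "coprime k (lcm a L div a)"
proof -
  define g where "g = gcd a L"
  have "0 < g" using assms(1) by (simp add: g_def)
  have "lcm a L = a * (L div g)"
    by (simp add: lcm_nat_def g_def div_mult_swap)
  then have "lcm a L div a = L div g"
    using assms(1) by simp
  moreover have "gcd k (L div g) * g dvd 1 * g"
  proof -
    have "gcd k (L div g) * g dvd k * a"
      by (intro mult_dvd_mono) (simp_all add: g_def)
    moreover have "gcd k (L div g) * g dvd L"
      by (metis dvd_div_mult_self g_def gcd_dvd2 mult_dvd_mono dvd_refl)
    ultimately have "gcd k (L div g) * g dvd gcd (k * a) L"
      by (rule gcd_greatest)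
    then show ?thesis
      by (simp only: gcd_eq_if_gcd_mult_dvd[OF gcd_dvd] g_def mult_1)
  qed
  then have "gcd k (L div g) = 1" using \<open>0 < g\<close> by simp
  ultimately show ?thesis by (simp add: coprime_iff_gcd_eq_1)
qed


lemma set_remove_nth: "i < length T \<Longrightarrow> set T = insert (T ! i) (set (remove_nth i T))"
  unfolding remove_nth_def by (subst id_take_nth_drop[of i T]) auto

lemma remove_nth_list_update: "remove_nth i (T[i := x]) = remove_nth i T"
  by (simp add: remove_nth_def)

lemma eq_list_update_if_remove_nth_eq:
  assumes "remove_nth i T = remove_nth i T'" "length T = length T'" "i < length T"
  shows "T' = T[i := T' ! i]"
proof -
  have "take i T = take i T'" "drop (Suc i) T = drop (Suc i) T'"
    using assms by (simp_all add: remove_nth_def append_eq_append_conv)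
  then show ?thesis
    using assms(2,3) id_take_nth_drop[of i T'] by (simp add: upd_conv_take_nth_drop)
qed

lemma Lcm_eq_lcm_remove_nth:
  "i < length T \<Longrightarrow> Lcm (set T) = lcm (T ! i) (Lcm (set (remove_nth i T)))"
  by (subst set_remove_nth) simp_all

locale fermat_stretch =
  fixes S :: "nat list" and i k :: nat
  assumes i_less: "i < length S" and S_i_pos: "0 < S ! i" and k_pos: "0 < k"
    and gcd_dvd: "gcd (k * S ! i) (Lcm (set (remove_nth i S))) dvd S ! i"
begin

abbreviation S' where "S' \<equiv> S[i := k * S ! i]"

lemma Lcm_stretch: "Lcm (set S') = k * Lcm (set S)"
  using Lcm_eq_lcm_remove_nth[of i S'] Lcm_eq_lcm_remove_nth[of i S] i_less
  by (simp add: remove_nth_list_update lcm_mult_if_gcd_mult_dvd[OF gcd_dvd])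

lemma weight_stretch_same: "Lcm (set S') div (k * S ! i) = Lcm (set S) div S ! i"
  using k_pos by (simp add: Lcm_stretch)

lemma weight_stretch_other:
  assumes "j < length S"
  shows "Lcm (set S') div S ! j = k * (Lcm (set S) div S ! j)"
proof -
  have "S ! j dvd Lcm (set S)" using assms by simp
  then show ?thesis by (simp add: Lcm_stretch div_mult_swap)
qed

lemma coprime_weight: "coprime k (Lcm (set S) div S ! i)"
  using coprime_if_gcd_mult_dvd[OF S_i_pos gcd_dvd] i_less Lcm_eq_lcm_remove_nth[of i S] by simp

lemma wdeg_stretch: "wdeg S' (stretch i k m) = k * wdeg S m"
  unfolding wdeg_def length_list_update sum_distrib_left
  using i_less
  by (intro sum.cong) (auto simp: weight_stretch_same weight_stretch_other lookup_stretch)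

lemma dvd_wdeg_stretch_iff: "k dvd wdeg S' m \<longleftrightarrow> k dvd Poly_Mapping.lookup m i"
proof -
  have "(\<Sum>j\<in>{..<length S} - {i}. Poly_Mapping.lookup m j * (Lcm (set S') div S' ! j)) =
      k * (\<Sum>j\<in>{..<length S} - {i}. Poly_Mapping.lookup m j * (Lcm (set S) div S ! j))"
    unfolding sum_distrib_left by (intro sum.cong) (auto simp: weight_stretch_other)
  then have "wdeg S' m = Poly_Mapping.lookup m i * (Lcm (set S) div S ! i) +
      (\<Sum>j\<in>{..<length S} - {i}. Poly_Mapping.lookup m j * (Lcm (set S) div S ! j)) * k"
    unfolding wdeg_def length_list_update
    using i_less by (simp add: sum.remove weight_stretch_same mult.commute)
  then show ?thesis
    using coprime_weight by (simp add: coprime_dvd_mult_left_iff)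
qed

lemma stretch_image_monomials:
  "stretch i k ` {m. Poly_Mapping.keys m \<subseteq> {..<length S}} =
     {m. Poly_Mapping.keys m \<subseteq> {..<length S} \<and> k dvd wdeg S' m}"
proof -
  let ?M = "{m. Poly_Mapping.keys m \<subseteq> {..<length S}}"
  have "stretch i k -` ?M = ?M"
    by (simp add: keys_stretch k_pos)
  then have "stretch i k ` ?M = ?M \<inter> range (stretch i k)"
    by (metis image_vimage_eq)
  then show ?thesis
    by (auto simp: range_stretch k_pos dvd_wdeg_stretch_iff)
qed

lemma stretch_image_homogeneous_monomials:
  "stretch i k ` {m. Poly_Mapping.keys m \<subseteq> {..<length S} \<and> wdeg S m = d} =
     {m. Poly_Mapping.keys m \<subseteq> {..<length S} \<and> wdeg S' m = d * k}"
proof -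
  let ?M = "{m. Poly_Mapping.keys m \<subseteq> {..<length S} \<and> wdeg S' m = d * k}"
  have "stretch i k -` ?M = {m. Poly_Mapping.keys m \<subseteq> {..<length S} \<and> wdeg S m = d}"
    using k_pos by (auto simp: keys_stretch wdeg_stretch)
  moreover have "stretch i k ` (stretch i k -` ?M) = ?M \<inter> range (stretch i k)"
    by (rule image_vimage_eq)
  ultimately show ?thesis
    by (auto simp: range_stretch k_pos dvd_wdeg_stretch_iff[symmetric])
qed

section \<open>The isomorphism\<close>

definition subst_class :: "'a::field mpoly \<Rightarrow> 'a mpoly set" where
  "subst_class p = fermat_ideal S' +>\<^bsub>pring (length S)\<^esub> push_key (stretch i k) p"

lemma ring_hom_ring_subst_class:
  "ring_hom_ring (pring (length S)) (B_ring S') subst_class"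
proof (rule ring_hom_ringI2)
  show "ring (pring (length S))" using cring_pring by (rule cring.axioms)
  show "ring (B_ring S')"
    unfolding B_ring_def by (rule ideal.quotient_is_ring[OF ideal_fermat_ideal])
  have "(+>\<^bsub>pring (length S)\<^esub>) (fermat_ideal S') \<in> ring_hom (pring (length S)) (B_ring S')"
    using ideal.rcos_ring_hom[OF ideal_fermat_ideal[of S']] by (simp add: B_ring_def)
  then show "subst_class \<in> ring_hom (pring (length S)) (B_ring S')"
    using ring_hom_trans[OF push_key_stretch_ring_hom[OF k_pos]]
    by (simp add: subst_class_def[abs_def] comp_def)
qed

lemma kernel_subst_class:
  "a_kernel (pring (length S)) (B_ring S') subst_class = fermat_ideal S"
proof -
  interpret I': ideal "fermat_ideal S'" "pring (length S)"
    using ideal_fermat_ideal[of S'] by simp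
  interpret I: ideal "fermat_ideal S" "pring (length S)"
    by (rule ideal_fermat_ideal)
  have "subst_class p = \<zero>\<^bsub>B_ring S'\<^esub> \<longleftrightarrow> p \<in> fermat_ideal S"
    if p: "p \<in> carrier (pring (length S))" for p :: "'a mpoly"
  proof -
    have q: "push_key (stretch i k) p \<in> carrier (pring (length S))"
      using push_key_stretch_carrier[OF k_pos p] .
    have "subst_class p = \<zero>\<^bsub>B_ring S'\<^esub> \<longleftrightarrow> push_key (stretch i k) p \<in> fermat_ideal S'"
      using I'.a_rcos_const I'.a_rcos_self[OF q]
      by (auto simp: subst_class_def B_ring_def FactRing_def)
    also have "\<dots> \<longleftrightarrow> p \<in> fermat_ideal S"
      using push_key_stretch_mem_fermat_ideal_iff[OF k_pos i_less p] .
    finally show ?thesis .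
  qed
  then show ?thesis
    using I.a_subset by (auto simp: a_kernel_def')
qed

lemma subst_class_image:
  "subst_class ` {p. Poly_Mapping.keys p \<subseteq> A} =
     (\<lambda>q. fermat_ideal S' +>\<^bsub>pring (length S)\<^esub> q) ` {q. Poly_Mapping.keys q \<subseteq> stretch i k ` A}"
  by (simp add: subst_class_def image_image[symmetric] image_push_key_keys_subset inj_stretch
      k_pos del: image_image)

lemma image_subst_class: "subst_class ` carrier (pring (length S)) = carrier (veronese S' k)"
  by (simp add: carrier_pring subst_class_image stretch_image_monomials
      carrier_veronese_eq_image)

theorem graded_iso_veronese_stretch: "graded_iso_veronese TYPE('a::field) S S' k"
proof -
  define induced where "induced C = the_elem ((subst_class :: 'a mpoly \<Rightarrow> _) ` C)" for C
  interpret h: ring_hom_ring "pring (length S)" "B_ring S'" "subst_class :: 'a mpoly \<Rightarrow> _"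
    by (rule ring_hom_ring_subst_class)
  have induced_class: "induced (fermat_ideal S +>\<^bsub>pring (length S)\<^esub> p) = subst_class p"
    if "p \<in> carrier (pring (length S))" for p :: "'a mpoly"
    using h.the_elem_simp[OF that] by (simp add: induced_def kernel_subst_class)
  have "induced \<in> ring_iso (pring (length S) Quot fermat_ideal S)
      ((B_ring S')\<lparr>carrier := carrier (veronese S' k)\<rparr>)"
    using h.FactRing_iso_set_aux unfolding kernel_subst_class image_subst_class induced_def .
  moreover have "(B_ring S')\<lparr>carrier := carrier (veronese S' k)\<rparr> = veronese S' k"
    by (simp add: veronese_def)
  ultimately have "induced \<in> ring_iso (B_ring S) (veronese S' k)"
    unfolding B_ring_def[of S] by metis
  moreover have "induced (fermat_ideal S +>\<^bsub>pring (length S)\<^esub> const_poly c) =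
      fermat_ideal S' +>\<^bsub>pring (length S')\<^esub> const_poly c" for c :: 'a
    using induced_class[of "const_poly c"]
    by (simp add: const_poly_def carrier_pring subst_class_def inj_stretch k_pos)
  moreover have "induced ` B_part S d = (B_part S' (d * k) :: 'a mpoly set set)" for d
  proof -
    let ?M = "{m. Poly_Mapping.keys m \<subseteq> {..<length S} \<and> wdeg S m = d}"
    have "induced ` B_part S d =
        (subst_class :: 'a mpoly \<Rightarrow> _) ` {p. Poly_Mapping.keys p \<subseteq> ?M}"
      unfolding B_part_eq_image image_image
      by (intro image_cong refl induced_class) (auto simp: carrier_pring)
    then show ?thesis
      by (simp add: subst_class_image stretch_image_homogeneous_monomials B_part_eq_image)
  qed
  ultimately show ?thesis
    unfolding graded_iso_veronese_def by blast
qed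

end

lemma fermat_stretch_if_le_idx:
  assumes "le_idx S i S'" "length S = length S'" "i < length S" "0 < S ! i" "0 < S' ! i"
  shows "fermat_stretch S i (S' ! i div S ! i)" and "S' = S[i := (S' ! i div S ! i) * S ! i]"
proof -
  have rem: "remove_nth i S = remove_nth i S'" and gcd_dvd: "g_idx i S' dvd S ! i"
    and dvd: "S ! i dvd S' ! i"
    using assms(1) by (simp_all add: le_idx_def)
  have S'_i: "S' ! i = (S' ! i div S ! i) * S ! i" using dvd by simp
  then show "S' = S[i := (S' ! i div S ! i) * S ! i]"
    using eq_list_update_if_remove_nth_eq[OF rem assms(2,3)] by simp
  show "fermat_stretch S i (S' ! i div S ! i)"
  proof
    show "0 < S' ! i div S ! i" using assms(5) S'_i by (metis gr0I mult_0 less_irrefl)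
    show "gcd (S' ! i div S ! i * S ! i) (Lcm (set (remove_nth i S))) dvd S ! i"
      using gcd_dvd S'_i by (simp add: g_idx_def rem)
  qed (use assms in simp_all)
qed

theorem proposition5p2:
  fixes S S' :: "nat list" and n i :: nat
  assumes "n \<ge> 3" and "length S = n" and "length S' = n"
    and "\<forall>a \<in> set S. a > 0" and "\<forall>a \<in> set S'. a > 0"
    and "i < n" and "le_idx S i S'"
  shows "graded_iso_veronese TYPE('a::field_char_0) S S' (S' ! i div S ! i)"
proof -
  have "length S = length S'" "i < length S" "0 < S ! i" "0 < S' ! i"
    using assms(2-6) by simp_all
  note stretch = fermat_stretch_if_le_idx[OF assms(7) this]
  show ?thesis
    using fermat_stretch.graded_iso_veronese_stretch[OF stretch(1)] by (subst stretch(2))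
qed

end
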